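(* Let $p,p'\ge1$ with $|p-p'|=1$, $p_{\min}=\min\{p,p'\}$, and let $S$ be a Sturmian word. A palindrome $X$ is maximal in $S$ if and only if the palindrome $a^{p_{\min}}\,b\,\alpha_{(p,p')}(X)\,a^{p_{\min}}$ is maximal in $\alpha_{(p,p')}(S)$.
   Context: $\alpha_{(p,p')}$ is the morphism $a\mapsto a^pb$, $b\mapsto a^{p'}b$. A Sturmian word is a right-infinite aperiodic word over $\{a,b\}$ with exactly $n+1$ factors of each length $n$. A palindrome is a word equal to its reverse. A palindrome $P$ is maximal in a word $W$ if $lPl'$ is a factor of $W$ for some letters $l\neq l'$ in $\{a,b\}$. *)

theory Defs
  imports Main
begin

datatype letter = a | b

type_synonym word = "letter list"
type_synonym iword = "nat \<Rightarrow> letter"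

definition factor :: "word \<Rightarrow> iword \<Rightarrow> bool" where
  "factor u W \<longleftrightarrow> (\<exists>i. u = map W [i..<i + length u])"

definition factors_of_length :: "iword \<Rightarrow> nat \<Rightarrow> word set" where
  "factors_of_length W n = {u. length u = n \<and> factor u W}"

definition eventually_periodic :: "iword \<Rightarrow> bool" where
  "eventually_periodic W \<longleftrightarrow> (\<exists>q>0. \<exists>N. \<forall>n\<ge>N. W (n + q) = W n)"

definition sturmian :: "iword \<Rightarrow> bool" where
  "sturmian W \<longleftrightarrow> \<not> eventually_periodic W \<and>
     (\<forall>n. card (factors_of_length W n) = n + 1)"

definition palindrome :: "word \<Rightarrow> bool" where
  "palindrome P \<longleftrightarrow> rev P = P"

definition maximal_pal :: "word \<Rightarrow> iword \<Rightarrow> bool" where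
  "maximal_pal P W \<longleftrightarrow> palindrome P \<and>
     (\<exists>l l'. l \<noteq> l' \<and> factor (l # P @ [l']) W)"

fun alpha_letter :: "nat \<Rightarrow> nat \<Rightarrow> letter \<Rightarrow> word" where
  "alpha_letter p p' a = replicate p a @ [b]"
| "alpha_letter p p' b = replicate p' a @ [b]"

definition alpha :: "nat \<Rightarrow> nat \<Rightarrow> word \<Rightarrow> word" where
  "alpha p p' w = concat (map (alpha_letter p p') w)"

text \<open>Image of a right-infinite word (all letter images are nonempty, so the
  n-th letter of the image lies in the image of the prefix of length n+1).\<close>
definition alpha_inf :: "nat \<Rightarrow> nat \<Rightarrow> iword \<Rightarrow> iword" where
  "alpha_inf p p' W n = alpha p p' (map W [0..<Suc n]) ! n"

end

theory Submission
  imports Defs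
begin

text \<open>Let \<open>m = min p p'\<close>. The word \<open>\<alpha>(S)\<close> is a concatenation of blocks \<open>a\<^sup>e b\<close>, one for each
  letter of \<open>S\<close>, and since \<open>|p - p'| = 1\<close> the two letters have block lengths \<open>m\<close> and \<open>m + 1\<close>.
  Sturmian words are recurrent (by the Morse--Hedlund theorem), so an occurrence of \<open>l X l'\<close> in \<open>S\<close>
  is preceded by some letter \<open>c\<close>, and \<open>\<alpha>(c l X l')\<close> contains \<open>a P b\<close> or \<open>b P a\<close>, where
  \<open>P = a\<^sup>m b \<alpha>(X) a\<^sup>m\<close>, according to which of \<open>l, l'\<close> has the longer block. Conversely, in an
  occurrence of \<open>l P l'\<close> the \<open>b\<close> in front of \<open>\<alpha>(X)\<close> ends a block, so \<open>\<alpha>(X)\<close> parses uniquely into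
  blocks and comes from an occurrence of \<open>X\<close> in \<open>S\<close>; the runs of \<open>a\<close> on either side then force
  block lengths \<open>m + 1\<close> and \<open>m\<close> (in some order) for the neighbouring letters, which therefore differ.\<close>

definition occurs_at :: "word \<Rightarrow> iword \<Rightarrow> nat \<Rightarrow> bool" where
  "occurs_at u W k \<longleftrightarrow> map W [k..<k + length u] = u"

lemma factor_iff_occurs_at: "factor u W \<longleftrightarrow> (\<exists>k. occurs_at u W k)"
  unfolding factor_def occurs_at_def by (auto simp: eq_commute[of u])

lemma occurs_at_Nil [simp]: "occurs_at [] W k"
  by (simp add: occurs_at_def)

lemma occurs_at_Cons [simp]: "occurs_at (c # u) W k \<longleftrightarrow> W k = c \<and> occurs_at u W (Suc k)"
  by (auto simp: occurs_at_def upt_conv_Cons simp del: upt_Suc)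

lemma occurs_at_append [simp]:
  "occurs_at (u @ v) W k \<longleftrightarrow> occurs_at u W k \<and> occurs_at v W (k + length u)"
  by (induction u arbitrary: k) auto

lemma factor_of_occurs_at_infix: "occurs_at (u @ v @ w) W k \<Longrightarrow> factor v W"
  by (auto simp: factor_iff_occurs_at)

lemma occurs_at_replicate_le:
  assumes "occurs_at (replicate x c) W k" and "occurs_at (replicate y c @ [d]) W k" and "c \<noteq> d"
  shows "x \<le> y"
proof (rule ccontr)
  assume "\<not> x \<le> y"
  then obtain z where "x = y + Suc z"
    using less_imp_Suc_add by fastforce
  then have "replicate x c = replicate y c @ c # replicate z c"
    by (simp only: replicate_add replicate_Suc)
  then show False
    using assms by simp
qed

lemma occurs_at_replicate_eq:
  assumes "occurs_at (replicate x c @ [d]) W k" and "occurs_at (replicate y c @ [d]) W k" and "c \<noteq> d"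
  shows "x = y"
  using occurs_at_replicate_le[of x c W k y d] occurs_at_replicate_le[of y c W k x d] assms
  by (simp add: le_antisym)

lemma factors_of_length_eq: "factors_of_length W n = range (\<lambda>i. map W [i..<i + n])"
  by (auto simp: factors_of_length_def factor_def)

lemma map_upt_in_factors_of_length: "map W [i..<i + n] \<in> factors_of_length W n"
  by (simp add: factors_of_length_eq)

lemma finite_factors_of_length: "finite (factors_of_length W n)"
proof -
  have "(UNIV :: letter set) = {a, b}"
    using letter.exhaust by blast
  then have "finite (UNIV :: letter set)"
    by (metis finite.emptyI finite_insert)
  then have "finite {xs :: word. set xs \<subseteq> UNIV \<and> length xs = n}"
    by (rule finite_lists_length_eq)
  then show ?thesis
    by (rule rev_finite_subset) (auto simp: factors_of_length_def)
qed

lemma butlast_factors_of_length_Suc: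
  "butlast ` factors_of_length W (Suc n) = factors_of_length W n"
  by (simp add: factors_of_length_eq image_image)

lemma card_factors_of_length_mono:
  "card (factors_of_length W n) \<le> card (factors_of_length W (Suc n))"
  using card_image_le[OF finite_factors_of_length, of butlast W "Suc n"]
  by (simp add: butlast_factors_of_length_Suc)

lemma card_factors_of_length_0: "card (factors_of_length W 0) = 1"
  by (simp add: factors_of_length_eq)

lemma factor_complexity_plateau:
  assumes "card (factors_of_length W k) \<le> k"
  obtains n where "card (factors_of_length W n) = card (factors_of_length W (Suc n))"
proof (rule ccontr)
  assume "\<not> thesis"
  then have strict: "\<forall>n. card (factors_of_length W n) \<noteq> card (factors_of_length W (Suc n))"
    using that by blast
  have "n + 1 \<le> card (factors_of_length W n)" for n
  proof (induction n)
    case 0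
    show ?case by (simp add: card_factors_of_length_0)
  next
    case (Suc n)
    have "card (factors_of_length W n) < card (factors_of_length W (Suc n))"
      using strict card_factors_of_length_mono[of W n] by (simp add: order_le_neq_trans)
    with Suc.IH show ?case
      by linarith
  qed
  from this[of k] assms show False
    by simp
qed

lemma eventually_periodic_of_complexity_plateau:
  assumes "card (factors_of_length W n) = card (factors_of_length W (Suc n))"
  shows "eventually_periodic W"
proof -
  define g where "g i = map W [i..<i + n]" for i
  have "inj_on butlast (factors_of_length W (Suc n))"
    using assms by (simp add: inj_on_iff_eq_card finite_factors_of_length butlast_factors_of_length_Suc)
  then have extension_unique: "W (i + n) = W (j + n) \<and> g (Suc i) = g (Suc j)" if "g i = g j" for i j
  proof -
    have "butlast (map W [i..<i + Suc n]) = butlast (map W [j..<j + Suc n])"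
      using that by (simp add: g_def)
    then have extended: "map W [i..<i + Suc n] = map W [j..<j + Suc n]"
      using inj_onD[OF \<open>inj_on butlast _\<close> _ map_upt_in_factors_of_length map_upt_in_factors_of_length]
      by blast
    have "W (i + n) = W (j + n)"
      using arg_cong[OF extended, of "\<lambda>xs. xs ! n"] by (simp add: nth_append)
    moreover have "g (Suc i) = g (Suc j)"
      using arg_cong[OF extended, of tl] by (simp add: g_def upt_conv_Cons del: upt_Suc)
    ultimately show ?thesis ..
  qed
  have "finite (range g)"
    using finite_factors_of_length[of W n]
    by (rule rev_finite_subset) (auto simp: factors_of_length_eq g_def)
  then have "\<not> inj g"
    using finite_imageD infinite_UNIV_nat by blast
  then obtain i j where "i \<noteq> j" and "g i = g j"
    unfolding inj_def by blast
  then have "\<exists>i j. i < j \<and> g i = g j"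
    by (metis linorder_neq_iff)
  then obtain i j where "i < j" and "g i = g j"
    by blast
  have shifted: "g (i + t) = g (j + t)" for t
  proof (induction t)
    case 0
    show ?case using \<open>g i = g j\<close> by simp
  next
    case (Suc t)
    show ?case using extension_unique[OF Suc.IH] by simp
  qed
  have "\<forall>k\<ge>i + n. W (k + (j - i)) = W k"
  proof (intro allI impI)
    fix k
    assume "i + n \<le> k"
    then show "W (k + (j - i)) = W k"
      using extension_unique[OF shifted[of "k - (i + n)"]] \<open>i < j\<close> by (simp add: ac_simps)
  qed
  moreover have "j - i > 0"
    using \<open>i < j\<close> by simp
  ultimately show ?thesis
    unfolding eventually_periodic_def by blast
qed

theorem eventually_periodic_of_low_complexity:
  assumes "card (factors_of_length W k) \<le> k"
  shows "eventually_periodic W"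
proof -
  obtain n where "card (factors_of_length W n) = card (factors_of_length W (Suc n))"
    using factor_complexity_plateau[OF assms] .
  then show ?thesis
    by (rule eventually_periodic_of_complexity_plateau)
qed

lemma factor_occurs_at_positive:
  assumes "\<not> eventually_periodic W" and "card (factors_of_length W (length u)) \<le> Suc (length u)"
    and "factor u W"
  shows "\<exists>k>0. occurs_at u W k"
proof (rule ccontr)
  assume not_later: "\<not> ?thesis"
  define W' where "W' = W \<circ> Suc"
  have shift: "map W' [i..<i + length u] = map W [Suc i..<Suc i + length u]" for i
    by (simp add: W'_def map_Suc_upt flip: map_map)
  have "factors_of_length W' (length u) \<subseteq> factors_of_length W (length u) - {u}"
  proof
    fix v
    assume "v \<in> factors_of_length W' (length u)"
    then obtain i where v: "v = map W [Suc i..<Suc i + length u]"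
      using shift by (auto simp: factors_of_length_eq)
    have "v \<noteq> u"
    proof
      assume "v = u"
      then have "occurs_at u W (Suc i)"
        using v by (simp add: occurs_at_def del: upt_Suc)
      then show False
        using not_later by blast
    qed
    then show "v \<in> factors_of_length W (length u) - {u}"
      using v map_upt_in_factors_of_length by blast
  qed
  moreover have "u \<in> factors_of_length W (length u)"
    using assms(3) by (simp add: factors_of_length_def)
  ultimately have "card (factors_of_length W' (length u)) \<le> length u"
    using assms(2) card_mono[OF _ \<open>_ \<subseteq> _\<close>]
    by (simp add: finite_factors_of_length card_Diff_singleton)
  then have "eventually_periodic W'"
    by (rule eventually_periodic_of_low_complexity)
  then obtain q N where "q > 0" and "\<forall>i\<ge>N. W' (i + q) = W' i"
    unfolding eventually_periodic_def by blast
  have "\<forall>i\<ge>Suc N. W (i + q) = W i"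
  proof (intro allI impI)
    fix i
    assume "Suc N \<le> i"
    then obtain i' where "i = Suc i'" and "N \<le> i'"
      by (cases i) auto
    then show "W (i + q) = W i"
      using \<open>\<forall>i\<ge>N. W' (i + q) = W' i\<close> by (simp add: W'_def)
  qed
  then show False
    using assms(1) \<open>q > 0\<close> unfolding eventually_periodic_def by blast
qed

definition alpha_exp :: "nat \<Rightarrow> nat \<Rightarrow> letter \<Rightarrow> nat" where
  "alpha_exp p p' c = (case c of a \<Rightarrow> p | b \<Rightarrow> p')"

lemma alpha_exp_eq_iff: "p \<noteq> p' \<Longrightarrow> alpha_exp p p' c = alpha_exp p p' d \<longleftrightarrow> c = d"
  by (cases c; cases d) (auto simp: alpha_exp_def)

lemma alpha_exp_cases:
  "{p, p'} = {m, Suc m} \<Longrightarrow> alpha_exp p p' c = m \<or> alpha_exp p p' c = Suc m"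
  by (cases c) (auto simp: alpha_exp_def doubleton_eq_iff)

lemma alpha_Nil [simp]: "alpha p p' [] = []"
  by (simp add: alpha_def)

lemma alpha_Cons [simp]: "alpha p p' (c # w) = replicate (alpha_exp p p' c) a @ b # alpha p p' w"
  by (cases c) (simp_all add: alpha_def alpha_exp_def)

lemma alpha_append [simp]: "alpha p p' (u @ v) = alpha p p' u @ alpha p p' v"
  by (simp add: alpha_def)

lemma length_le_length_alpha: "length w \<le> length (alpha p p' w)"
  by (induction w) auto

lemma rev_b_Cons_alpha: "rev (b # alpha p p' w) = b # alpha p p' (rev w)"
  by (induction w) auto

lemma palindrome_alpha_image:
  "palindrome X \<Longrightarrow> palindrome (replicate m a @ [b] @ alpha p p' X @ replicate m a)"
  using rev_b_Cons_alpha[of p p' X] by (simp add: palindrome_def)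

lemma maximal_pal_of_occurs_at:
  assumes "palindrome X" and "occurs_at X W (Suc i)" and "W i \<noteq> W (Suc i + length X)"
  shows "maximal_pal X W"
proof -
  have "occurs_at (W i # X @ [W (Suc i + length X)]) W i"
    using assms(2) by simp
  then show ?thesis
    using assms(1,3) unfolding maximal_pal_def factor_iff_occurs_at by blast
qed

context
  fixes p p' :: nat and S :: iword
begin

definition alpha_pos :: "nat \<Rightarrow> nat" where
  "alpha_pos i = length (alpha p p' (map S [0..<i]))"

lemma alpha_pos_0 [simp]: "alpha_pos 0 = 0"
  by (simp add: alpha_pos_def)

lemma alpha_pos_Suc [simp]: "alpha_pos (Suc i) = alpha_pos i + alpha_exp p p' (S i) + 1"
  by (simp add: alpha_pos_def)

lemma alpha_pos_add:
  "occurs_at w S i \<Longrightarrow> alpha_pos (i + length w) = alpha_pos i + length (alpha p p' w)"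
  by (simp add: alpha_pos_def occurs_at_def upt_add_eq_append[of 0 i])

lemma alpha_prefix_nth:
  assumes "i \<le> j" and "n < length (alpha p p' (map S [0..<i]))"
  shows "alpha p p' (map S [0..<j]) ! n = alpha p p' (map S [0..<i]) ! n"
proof -
  obtain k where "j = i + k"
    using le_Suc_ex[OF assms(1)] by blast
  then show ?thesis
    using assms(2) by (simp add: upt_add_eq_append[of 0 i] nth_append)
qed

lemma alpha_inf_nth:
  assumes "n < length (alpha p p' (map S [0..<N]))"
  shows "alpha_inf p p' S n = alpha p p' (map S [0..<N]) ! n"
proof -
  have "n < length (alpha p p' (map S [0..<Suc n]))"
    using length_le_length_alpha[of "map S [0..<Suc n]" p p'] by (simp del: upt_Suc)
  then show ?thesis
    using assms alpha_prefix_nth unfolding alpha_inf_def by (metis nat_le_linear)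
qed

lemma alpha_inf_occurs_at: "occurs_at w S i \<Longrightarrow> occurs_at (alpha p p' w) (alpha_inf p p' S) (alpha_pos i)"
proof -
  assume "occurs_at w S i"
  then have prefix: "alpha p p' (map S [0..<i + length w]) = alpha p p' (map S [0..<i]) @ alpha p p' w"
    by (simp add: occurs_at_def upt_add_eq_append[of 0 i])
  show ?thesis
    unfolding occurs_at_def
    by (rule nth_equalityI) (simp_all add: alpha_inf_nth[where N = "i + length w"] prefix alpha_pos_def nth_append)
qed

lemma alpha_inf_block:
  "occurs_at (replicate (alpha_exp p p' (S i)) a @ [b]) (alpha_inf p p' S) (alpha_pos i)"
  using alpha_inf_occurs_at[of "[S i]" i] by simp

lemma alpha_pos_cover: "\<exists>i. alpha_pos i \<le> n \<and> n < alpha_pos (Suc i)"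
proof (induction n)
  case 0
  show ?case
    by (rule exI[of _ 0]) simp
next
  case (Suc n)
  then obtain i where "alpha_pos i \<le> n" and "n < alpha_pos (Suc i)"
    by blast
  show ?case
  proof (cases "Suc n < alpha_pos (Suc i)")
    case True
    then show ?thesis
      using \<open>alpha_pos i \<le> n\<close> le_Suc_eq by blast
  next
    case False
    then have "alpha_pos (Suc i) = Suc n"
      using \<open>n < alpha_pos (Suc i)\<close> by linarith
    then show ?thesis
      using alpha_pos_Suc[of "Suc i"] by (intro exI[of _ "Suc i"] conjI) linarith+
  qed
qed

lemma alpha_inf_a_run_in_block:
  assumes "occurs_at (replicate x a @ [b]) (alpha_inf p p' S) k"
  obtains i s where "k = alpha_pos i + s" and "s + x = alpha_exp p p' (S i)"
proof -
  obtain i where "alpha_pos i \<le> k" and "k < alpha_pos (Suc i)"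
    using alpha_pos_cover by blast
  define s where "s = k - alpha_pos i"
  define e where "e = alpha_exp p p' (S i)"
  have k: "k = alpha_pos i + s" and "s \<le> e"
    using \<open>alpha_pos i \<le> k\<close> \<open>k < alpha_pos (Suc i)\<close> by (auto simp: s_def e_def)
  then have "replicate e a = replicate s a @ replicate (e - s) a"
    by (simp flip: replicate_add)
  then have "occurs_at (replicate (e - s) a @ [b]) (alpha_inf p p' S) k"
    using alpha_inf_block[of i, folded e_def] k by simp
  then have "x = e - s"
    using occurs_at_replicate_eq assms by blast
  then show thesis
    using that k \<open>s \<le> e\<close> by (simp add: e_def)
qed

lemma occurs_at_of_alpha_inf:
  assumes "p \<noteq> p'" and "occurs_at (alpha p p' w) (alpha_inf p p' S) (alpha_pos i)"
  shows "occurs_at w S i"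
  using assms(2)
proof (induction w arbitrary: i)
  case (Cons c w)
  then have "occurs_at (replicate (alpha_exp p p' c) a @ [b]) (alpha_inf p p' S) (alpha_pos i)"
    and rest: "occurs_at (alpha p p' w) (alpha_inf p p' S) (alpha_pos i + alpha_exp p p' c + 1)"
    by simp_all
  then have "alpha_exp p p' c = alpha_exp p p' (S i)"
    using alpha_inf_block occurs_at_replicate_eq by blast
  then have "S i = c"
    using alpha_exp_eq_iff[OF assms(1)] by simp
  then show ?case
    using Cons.IH[of "Suc i"] rest by simp
qed simp

lemma maximal_pal_alpha_image:
  assumes exps: "{p, p'} = {m, Suc m}" and "sturmian S" and "maximal_pal X S"
  shows "maximal_pal (replicate m a @ [b] @ alpha p p' X @ replicate m a) (alpha_inf p p' S)"
    (is "maximal_pal ?P _")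
proof -
  obtain l l' where "l \<noteq> l'" and "factor (l # X @ [l']) S"
    using assms(3) by (auto simp: maximal_pal_def)
  \<comment> \<open>The letter before the occurrence supplies the \<open>b\<close> in front of \<open>P\<close> when \<open>l\<close> has the shorter block.\<close>
  then obtain k where "k > 0" and occ: "occurs_at (l # X @ [l']) S k"
    using factor_occurs_at_positive[of S "l # X @ [l']"] assms(2) by (auto simp: sturmian_def)
  then obtain i where "k = Suc i"
    using gr0_implies_Suc by blast
  with occ have "occurs_at (S i # l # X @ [l']) S i"
    by simp
  then have image: "occurs_at (alpha p p' (S i # l # X @ [l'])) (alpha_inf p p' S) (alpha_pos i)"
    by (rule alpha_inf_occurs_at)
  have "p \<noteq> p'"
    using exps by auto
  then have "alpha_exp p p' l \<noteq> alpha_exp p p' l'"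
    using \<open>l \<noteq> l'\<close> alpha_exp_eq_iff by blast
  then consider "alpha_exp p p' l = Suc m" and "alpha_exp p p' l' = m"
    | "alpha_exp p p' l = m" and "alpha_exp p p' l' = Suc m"
    using alpha_exp_cases[OF exps, of l] alpha_exp_cases[OF exps, of l'] by auto
  then have "\<exists>u v c c'. c \<noteq> c' \<and> alpha p p' (S i # l # X @ [l']) = u @ (c # ?P @ [c']) @ v"
  proof cases
    case 1
    then have "alpha p p' (S i # l # X @ [l'])
        = (replicate (alpha_exp p p' (S i)) a @ [b]) @ (a # ?P @ [b]) @ []"
      by simp
    then show ?thesis by blast
  next
    case 2
    then have "alpha p p' (S i # l # X @ [l'])
        = replicate (alpha_exp p p' (S i)) a @ (b # ?P @ [a]) @ [b]"
      by (simp add: replicate_append_same[symmetric])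
    then show ?thesis by blast
  qed
  then obtain c c' where "c \<noteq> c'" and "factor (c # ?P @ [c']) (alpha_inf p p' S)"
    using image factor_of_occurs_at_infix by (metis (no_types))
  moreover have "palindrome ?P"
    using assms(3) palindrome_alpha_image by (auto simp: maximal_pal_def)
  ultimately show ?thesis
    unfolding maximal_pal_def by blast
qed

lemma maximal_pal_alpha_preimage:
  assumes exps: "{p, p'} = {m, Suc m}" and "palindrome X"
    and "maximal_pal (replicate m a @ [b] @ alpha p p' X @ replicate m a) (alpha_inf p p' S)"
  shows "maximal_pal X S"
proof -
  let ?T = "alpha_inf p p' S" and ?n = "length (alpha p p' X)"
  have "p \<noteq> p'"
    using exps by auto
  obtain l l' k where "l \<noteq> l'"
    and occ: "occurs_at (l # replicate m a @ [b] @ alpha p p' X @ replicate m a @ [l']) ?T k"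
    using assms(3) by (auto simp: maximal_pal_def factor_iff_occurs_at)
  then consider "l = a" and "l' = b" | "l = b" and "l' = a"
    by (cases l; cases l') auto
  then obtain i where X: "occurs_at X S (Suc i)"
    and "alpha_exp p p' (S i) \<noteq> alpha_exp p p' (S (Suc i + length X))"
  proof cases
    case 1
    with occ have run: "occurs_at (replicate (Suc m) a @ [b]) ?T k"
      and image: "occurs_at (alpha p p' X) ?T (k + m + 2)"
      and right: "occurs_at (replicate m a @ [b]) ?T (k + m + 2 + ?n)"
      by simp_all
    obtain i s where "k = alpha_pos i + s" and "s + Suc m = alpha_exp p p' (S i)"
      using alpha_inf_a_run_in_block[OF run] .
    then have left_exp: "alpha_exp p p' (S i) = Suc m" and pos: "alpha_pos (Suc i) = k + m + 2"
      using alpha_exp_cases[OF exps, of "S i"] by auto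
    then have X: "occurs_at X S (Suc i)"
      using occurs_at_of_alpha_inf[OF \<open>p \<noteq> p'\<close>] image by simp
    then have right_pos: "alpha_pos (Suc i + length X) = k + m + 2 + ?n"
      using alpha_pos_add[OF X] pos by (simp del: alpha_pos_Suc)
    then have "alpha_exp p p' (S (Suc i + length X)) = m"
      using occurs_at_replicate_eq[OF alpha_inf_block right[folded right_pos]] by simp
    then show thesis
      using that[OF X] left_exp by simp
  next
    case 2
    with occ have left: "occurs_at (replicate 0 a @ [b]) ?T k"
      and mid: "occurs_at (replicate m a @ [b]) ?T (k + 1)"
      and image: "occurs_at (alpha p p' X) ?T (k + m + 2)"
      and "occurs_at (replicate m a @ [a]) ?T (k + m + 2 + ?n)"
      by simp_all
    then have right: "occurs_at (replicate (Suc m) a) ?T (k + m + 2 + ?n)"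
      by (simp only: replicate_Suc replicate_append_same[symmetric])
    obtain i s where "k = alpha_pos i + s" and "s + 0 = alpha_exp p p' (S i)"
      using alpha_inf_a_run_in_block[OF left] .
    then have pos: "alpha_pos (Suc i) = k + 1"
      by simp
    then have mid_exp: "alpha_exp p p' (S (Suc i)) = m"
      using occurs_at_replicate_eq[OF alpha_inf_block mid[folded pos]] by simp
    then have X: "occurs_at X S (Suc (Suc i))"
      using occurs_at_of_alpha_inf[OF \<open>p \<noteq> p'\<close>] image pos by simp
    then have right_pos: "alpha_pos (Suc (Suc i) + length X) = k + m + 2 + ?n"
      using alpha_pos_add[OF X] pos mid_exp by (simp del: alpha_pos_Suc add: alpha_pos_Suc[of "Suc i"])
    then have "Suc m \<le> alpha_exp p p' (S (Suc (Suc i) + length X))"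
      using occurs_at_replicate_le[OF right[folded right_pos] alpha_inf_block] by simp
    then have "alpha_exp p p' (S (Suc (Suc i) + length X)) = Suc m"
      using alpha_exp_cases[OF exps, of "S (Suc (Suc i) + length X)"] by auto
    then show thesis
      using that[OF X] mid_exp by simp
  qed
  then have "S i \<noteq> S (Suc i + length X)"
    by metis
  then show ?thesis
    by (rule maximal_pal_of_occurs_at[OF assms(2) X])
qed

end

theorem lemma2:
  fixes p p' :: nat and S :: iword and X :: word
  assumes "p \<ge> 1" and "p' \<ge> 1" and "p = p' + 1 \<or> p' = p + 1"
    and "sturmian S"
    and "palindrome X"
  shows "maximal_pal X S \<longleftrightarrow>
    maximal_pal (replicate (min p p') a @ [b] @ alpha p p' X @ replicate (min p p') a)
                (alpha_inf p p' S)"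
proof -
  have exps: "{p, p'} = {min p p', Suc (min p p')}"
    using assms(3) by auto
  show ?thesis
    using maximal_pal_alpha_image[OF exps assms(4)] maximal_pal_alpha_preimage[OF exps assms(5)]
    by blast
qed

end
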